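(* Let $\delta_\ell=94/194$. Let $G=(V,E)$ be an $(n-4)$-regular graph on $n>4$ nodes in which every clique has at most $\delta_\ell n$ nodes. Let $\emptyset\ne V'\subseteq V$ with $|V'|=tn$ and $0<t\le 1/2$. Then $$\mathsf M(V')\le\frac{2\delta_\ell-\tfrac12}{n-4}.$$
   Context: For a finite simple undirected graph $G=(V,E)$ with $m=|E|\ge1$ edges, degrees $d_v$, and $a_{u,v}=1$ if $\{u,v\}\in E$ and $0$ otherwise: for $C\subseteq V$, $\mathsf M(C)=\frac{1}{2m}\sum_{u\in C}\sum_{v\in C}\big(a_{u,v}-\frac{d_ud_v}{2m}\big)$, the sum over all ordered pairs including $u=v$. *)

theory Defs
  imports Complex_Main
begin

definition simple_graph :: "'a set \<Rightarrow> 'a set set \<Rightarrow> bool" where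
  "simple_graph V E \<longleftrightarrow> finite V \<and> (\<forall>e\<in>E. e \<subseteq> V \<and> card e = 2)"

definition adj :: "'a set set \<Rightarrow> 'a \<Rightarrow> 'a \<Rightarrow> real" where
  "adj E u v = (if {u, v} \<in> E then 1 else 0)"

definition degree :: "'a set set \<Rightarrow> 'a \<Rightarrow> nat" where
  "degree E v = card {e \<in> E. v \<in> e}"

definition regular :: "'a set \<Rightarrow> 'a set set \<Rightarrow> nat \<Rightarrow> bool" where
  "regular V E k \<longleftrightarrow> (\<forall>v\<in>V. degree E v = k)"

definition clique :: "'a set \<Rightarrow> 'a set set \<Rightarrow> 'a set \<Rightarrow> bool" where
  "clique V E C \<longleftrightarrow> C \<subseteq> V \<and> (\<forall>u\<in>C. \<forall>v\<in>C. u \<noteq> v \<longrightarrow> {u, v} \<in> E)"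

definition modularity :: "'a set set \<Rightarrow> 'a set \<Rightarrow> real" where
  "modularity E C = (let m = real (card E) in
     (1 / (2 * m)) * (\<Sum>u\<in>C. \<Sum>v\<in>C. adj E u v - real (degree E u) * real (degree E v) / (2 * m)))"

definition delta_l :: real where "delta_l = 94 / 194"

end

theory Submission
  imports Defs
begin

(* Write k = |V'| = t n and r = n - 4.  By the handshake lemma a
   regular graph has 2m = n r, so every degree term in M(V') equals r^2/(n r) and
     M(V') = (S - k^2 r / n) / (n r),
   where S is the number of ordered adjacent pairs inside V'.  Splitting the
   ordered pairs of V' into adjacent pairs, diagonal pairs and non-adjacent
   pairs gives S = k^2 - k - P.  Since every clique has at most delta_l n nodes,
   deleting one endpoint of a non-edge at a time (an induction on V') shows
   P >= 2 (k - delta_l n).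
   The numerator is then 4 t^2 n - t n - P, and an elementary estimate in t
   (two cases: t <= 1/4 and 1/4 < t <= 1/2) bounds it by (2 delta_l - 1/2) n. *)

definition non_edge_pairs :: "'a set set \<Rightarrow> 'a set \<Rightarrow> ('a \<times> 'a) set" where
  "non_edge_pairs E W = {(u, v) \<in> W \<times> W. u \<noteq> v \<and> {u, v} \<notin> E}"

lemma handshake:
  assumes "simple_graph V E"
  shows "(\<Sum>v\<in>V. degree E v) = 2 * card E"
proof -
  have fV: "finite V" and EV: "E \<subseteq> Pow V"
    using assms by (auto simp: simple_graph_def)
  then have fE: "finite E" by (meson finite_Pow_iff finite_subset)
  have "(\<Sum>v\<in>V. degree E v) = (\<Sum>v\<in>V. \<Sum>e\<in>E. if v \<in> e then 1 else 0)"
    unfolding degree_def using fE by (simp add: sum.If_cases Int_def conj_commute)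
  also have "\<dots> = (\<Sum>e\<in>E. \<Sum>v\<in>V. if v \<in> e then 1 else 0)"
    by (rule sum.swap)
  also have "\<dots> = (\<Sum>e\<in>E. card e)"
  proof (rule sum.cong)
    fix e assume "e \<in> E"
    then have "V \<inter> e = e" using EV by auto
    then show "(\<Sum>v\<in>V. if v \<in> e then 1 else 0) = card e"
      using fV by (simp add: sum.If_cases Int_def)
  qed simp
  also have "\<dots> = (\<Sum>e\<in>E. 2)"
    using assms by (intro sum.cong) (auto simp: simple_graph_def)
  finally show ?thesis by simp
qed

lemma regular_edge_count:
  assumes "simple_graph V E" and "regular V E r"
  shows "2 * card E = card V * r"
proof -
  have "(\<Sum>v\<in>V. degree E v) = (\<Sum>v\<in>V. r)"
    using assms(2) by (intro sum.cong) (auto simp: regular_def)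
  then show ?thesis using handshake[OF assms(1)] by simp
qed

lemma modularity_regular:
  assumes "simple_graph V E" and "regular V E r" and "W \<subseteq> V"
  shows "modularity E W =
    ((\<Sum>u\<in>W. \<Sum>v\<in>W. adj E u v) - real (card W) ^ 2 * real r / real (card V))
      / (real (card V) * real r)"
proof -
  let ?S = "\<Sum>u\<in>W. \<Sum>v\<in>W. adj E u v" and ?n = "real (card V)" and ?r = "real r"
  have m: "2 * real (card E) = ?n * ?r"
    using regular_edge_count[OF assms(1,2)] by (metis of_nat_mult of_nat_numeral)
  have deg: "real (degree E u) = ?r" if "u \<in> W" for u
    using assms(2,3) that by (auto simp: regular_def)
  have "modularity E W = 1 / (?n * ?r) * (\<Sum>u\<in>W. \<Sum>v\<in>W. adj E u v - ?r * ?r / (?n * ?r))"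
    unfolding modularity_def Let_def m using deg by (intro arg_cong2[where f = "(*)"] sum.cong) auto
  also have "\<dots> = (?S - real (card W) ^ 2 * (?r * ?r / (?n * ?r))) / (?n * ?r)"
    by (simp add: sum_subtractf power2_eq_square)
  also have "\<dots> = (?S - real (card W) ^ 2 * ?r / ?n) / (?n * ?r)"
    by (cases "r = 0") simp_all
  finally show ?thesis .
qed

lemma non_edge_pairs_subset: "non_edge_pairs E W \<subseteq> W \<times> W"
  by (auto simp: non_edge_pairs_def)

lemma finite_non_edge_pairs: "finite W \<Longrightarrow> finite (non_edge_pairs E W)"
  by (rule finite_subset[OF non_edge_pairs_subset]) simp

lemma sum_pair_indicator:
  assumes "finite W" and "P \<subseteq> W \<times> W"
  shows "(\<Sum>u\<in>W. \<Sum>v\<in>W. if (u, v) \<in> P then 1 else 0) = real (card P)"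
proof -
  have "(\<Sum>u\<in>W. \<Sum>v\<in>W. if (u, v) \<in> P then 1 else 0)
      = (\<Sum>p\<in>W \<times> W. if p \<in> P then 1 else (0::real))"
    by (simp add: sum.cartesian_product)
  also have "\<dots> = real (card P)"
    using assms by (simp add: sum.If_cases Int_absorb1)
  finally show ?thesis .
qed

lemma adjacent_pairs_count:
  assumes "finite W" and no_loops: "\<And>u. {u} \<notin> E"
  shows "(\<Sum>u\<in>W. \<Sum>v\<in>W. adj E u v)
    = real (card W) ^ 2 - real (card W) - real (card (non_edge_pairs E W))"
proof -
  let ?P = "non_edge_pairs E W"
  have "(\<Sum>u\<in>W. \<Sum>v\<in>W. adj E u v)
      = (\<Sum>u\<in>W. \<Sum>v\<in>W. 1 - (if u = v then 1 else 0) - (if (u, v) \<in> ?P then 1 else 0))"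
    by (intro sum.cong) (auto simp: adj_def non_edge_pairs_def no_loops)
  also have "\<dots> = (\<Sum>u\<in>W. \<Sum>v\<in>W. 1) - (\<Sum>u\<in>W. \<Sum>v\<in>W. if u = v then 1 else 0)
      - (\<Sum>u\<in>W. \<Sum>v\<in>W. if (u, v) \<in> ?P then 1 else 0)"
    by (simp only: sum_subtractf)
  also have "\<dots> = real (card W) ^ 2 - real (card W) - real (card ?P)"
    using assms(1) sum_pair_indicator[OF assms(1) non_edge_pairs_subset]
    by (simp add: power2_eq_square)
  finally show ?thesis .
qed

lemma clique_mono:
  assumes "W \<subseteq> W'" and "clique W E C"
  shows "clique W' E C"
  using assms by (auto simp: clique_def)

text \<open>If every clique inside \<open>W\<close> has at most \<open>B\<close> vertices, then \<open>W\<close> contains at least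
  \<open>2 (|W| - B)\<close> ordered non-adjacent pairs: as long as \<open>W\<close> is not a clique, deleting one
  endpoint of a non-edge destroys at least the two ordered pairs of that non-edge.\<close>
lemma non_edge_pairs_lower_bound:
  assumes "finite W" and "\<forall>C. clique W E C \<longrightarrow> real (card C) \<le> B"
  shows "2 * (real (card W) - B) \<le> real (card (non_edge_pairs E W))"
  using assms
proof (induction W rule: finite_psubset_induct)
  case (psubset W)
  show ?case
  proof (cases "clique W E W")
    case True
    then have "real (card W) \<le> B" using psubset.prems by blast
    then show ?thesis by simp
  next
    case False
    then obtain u v where uv: "u \<in> W" "v \<in> W" "u \<noteq> v" "{u, v} \<notin> E"
      by (auto simp: clique_def)
    let ?W = "W - {u}"
    have "\<forall>C. clique ?W E C \<longrightarrow> real (card C) \<le> B"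
      using psubset.prems clique_mono[of ?W W] by blast
    then have IH: "2 * (real (card ?W) - B) \<le> real (card (non_edge_pairs E ?W))"
      using psubset.IH uv(1) by blast
    have sub: "insert (u, v) (insert (v, u) (non_edge_pairs E ?W)) \<subseteq> non_edge_pairs E W"
      using uv by (auto simp: non_edge_pairs_def insert_commute)
    have "finite (non_edge_pairs E W)" "finite (non_edge_pairs E ?W)"
      using psubset.hyps by (simp_all add: finite_non_edge_pairs)
    moreover have "(u, v) \<notin> non_edge_pairs E ?W" "(v, u) \<notin> non_edge_pairs E ?W"
      by (auto simp: non_edge_pairs_def)
    ultimately have "card (non_edge_pairs E ?W) + 2 \<le> card (non_edge_pairs E W)"
      using card_mono[OF _ sub] uv(3) by simp
    then have pairs: "real (card (non_edge_pairs E ?W)) + 2 \<le> real (card (non_edge_pairs E W))"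
      by linarith
    have "real (card ?W) + 1 = real (card W)"
      using card_Suc_Diff1[OF psubset.hyps uv(1)] by (metis Suc_eq_plus1 of_nat_1 of_nat_add)
    then show ?thesis using IH pairs by argo
  qed
qed

lemma numerator_bound:
  fixes t n \<delta> P :: real
  assumes "0 < t" "t \<le> 1 / 2" "0 < n" "1 / 4 \<le> \<delta>"
    and "0 \<le> P" "2 * (t * n - \<delta> * n) \<le> P"
  shows "4 * t ^ 2 * n - t * n - P \<le> (2 * \<delta> - 1 / 2) * n"
proof -
  have slack: "0 \<le> (2 * \<delta> - 1 / 2) * n"
    using assms(3,4) by simp
  show ?thesis
  proof (cases "t \<le> 1 / 4")
    case True
    then have "t * (4 * t - 1) * n \<le> 0"
      using assms(1,3) by (intro mult_nonpos_nonneg mult_nonneg_nonpos) auto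
    then show ?thesis using slack assms(5) by (simp add: power2_eq_square algebra_simps)
  next
    case False
    then have "(4 * t - 1) * (t - 1 / 2) * n \<le> 0"
      using assms(2,3) by (intro mult_nonpos_nonneg mult_nonneg_nonpos) auto
    then show ?thesis using assms(6) by (simp add: power2_eq_square algebra_simps)
  qed
qed

theorem lemma5:
  fixes V :: "'a set" and E :: "'a set set" and V' :: "'a set" and n :: nat and t :: real
  assumes "simple_graph V E"
    and "n = card V" and "n > 4"
    and "regular V E (n - 4)"
    and "\<forall>C. clique V E C \<longrightarrow> real (card C) \<le> delta_l * real n"
    and "V' \<noteq> {}" and "V' \<subseteq> V"
    and "real (card V') = t * real n" and "0 < t" and "t \<le> 1 / 2"
  shows "modularity E V' \<le> (2 * delta_l - 1 / 2) / (real n - 4)"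
proof -
  define k where "k = real (card V')"
  define P where "P = real (card (non_edge_pairs E V'))"
  have fin: "finite V'"
    using assms(1,7) finite_subset by (auto simp: simple_graph_def)
  have no_loops: "\<And>u. {u} \<notin> E"
    using assms(1) by (force simp: simple_graph_def)
  have r: "real (n - 4) = real n - 4" using assms(3) by simp
  have "\<forall>C. clique V' E C \<longrightarrow> real (card C) \<le> delta_l * real n"
    using assms(5,7) clique_mono[of V' V] by blast
  then have "2 * (t * n - delta_l * n) \<le> P"
    using non_edge_pairs_lower_bound[OF fin] assms(8) by (simp add: P_def)
  then have numerator: "4 * t ^ 2 * n - t * n - P \<le> (2 * delta_l - 1 / 2) * n"
    using assms(3,9,10) by (intro numerator_bound) (simp_all add: P_def delta_l_def)
  have "modularity E V' = (k ^ 2 - k - P - k ^ 2 * (real n - 4) / n) / (n * (real n - 4))"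
    using modularity_regular[OF assms(1,4,7)] adjacent_pairs_count[OF fin no_loops]
    unfolding k_def P_def by (simp add: assms(2)[symmetric] r)
  also have "\<dots> = (4 * t ^ 2 * n - t * n - P) / (n * (real n - 4))"
    using assms(3,8) unfolding k_def by (simp add: field_simps power2_eq_square)
  also have "\<dots> \<le> (2 * delta_l - 1 / 2) * n / (n * (real n - 4))"
    using numerator assms(3) by (intro divide_right_mono) simp_all
  also have "\<dots> = (2 * delta_l - 1 / 2) / (real n - 4)"
    using assms(3) by simp
  finally show ?thesis .
qed

end
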